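(* Let $d\geq 1$, $1\leq a\leq d+1$, and $0<m_1<m_2\leq 2d+2$ be integers. If $m_1\geq a$ and $m_2\geq a+d+1$ with $(m_1,m_2)\neq(a,a+d+1)$, then $$\lim_{n\to\infty}\left(h_d^{(a)}(n)-\ell_{2d+2}^{(m_1,m_2)}(n)\right)=+\infty;$$ if $m_1\leq a$ and $m_2\leq a+d+1$ with $(m_1,m_2)\neq(a,a+d+1)$, then this limit is $-\infty$; and if $(m_1,m_2)=(a,a+d+1)$ then $h_d^{(a)}(n)=\ell_{2d+2}^{(m_1,m_2)}(n)$ for all $n$.
   Context: A partition is a finite nonincreasing sequence of positive integers (its parts); its size is not fixed. The perimeter of a partition with largest part $\alpha$ and $\lambda$ parts is $\alpha+\lambda-1$. A partition has $d$-distinct parts if any two of its parts differ by at least $d$. $h_d^{(a)}(n)$ is the number of partitions of perimeter $n$ whose parts are $d$-distinct and all $\geq a$. For $0<m_1<m_2\le m$, $\ell_m^{(m_1,m_2)}(n)$ is the number of partitions of perimeter $n$ all of whose parts are congruent to $m_1$ or $m_2$ modulo $m$. *)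

theory Defs
  imports Complex_Main
begin

text \<open>A partition is a nonempty finite nonincreasing list of positive integers
(nonempty so that the largest part, hence the perimeter, is defined).\<close>
definition is_partition :: "nat list \<Rightarrow> bool" where
  "is_partition xs \<longleftrightarrow> xs \<noteq> [] \<and> sorted_wrt (\<ge>) xs \<and> (\<forall>x\<in>set xs. 0 < x)"

definition perimeter :: "nat list \<Rightarrow> nat" where
  "perimeter xs = hd xs + length xs - 1"

definition d_distinct :: "nat \<Rightarrow> nat list \<Rightarrow> bool" where
  "d_distinct d xs \<longleftrightarrow> (\<forall>i j. i < j \<and> j < length xs \<longrightarrow> xs ! j + d \<le> xs ! i)"

definition h_count :: "nat \<Rightarrow> nat \<Rightarrow> nat \<Rightarrow> nat" where
  "h_count d a n = card {xs. is_partition xs \<and> perimeter xs = n \<and> d_distinct d xs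
                              \<and> (\<forall>x\<in>set xs. a \<le> x)}"

definition l_count :: "nat \<Rightarrow> nat \<Rightarrow> nat \<Rightarrow> nat \<Rightarrow> nat" where
  "l_count m m1 m2 n = card {xs. is_partition xs \<and> perimeter xs = n
                              \<and> (\<forall>x\<in>set xs. x mod m = m1 mod m \<or> x mod m = m2 mod m)}"

end

theory Submission
  imports Defs
begin

text \<open>If the admissible parts are enumerated increasingly as \<open>f 0 < f 1 < \<dots>\<close>, a partition
of perimeter \<open>n\<close> with largest part \<open>f j\<close> consists of that part and \<open>n - f j\<close> further parts
chosen with repetition among \<open>f 0, \<dots>, f j\<close>; so there are \<open>\<Sum>\<^sub>j C(n - f j + j, j)\<close> of them.
The parts congruent to \<open>m\<^sub>1\<close> or \<open>m\<^sub>2\<close> modulo \<open>2d + 2\<close> are enumerated by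
\<open>m\<^sub>1, m\<^sub>2, m\<^sub>1 + 2d + 2, \<dots>\<close>. Subtracting \<open>(k - 1 - i) d\<close> from the \<open>i\<close>-th of \<open>k\<close> parts turns a
\<open>d\<close>-distinct partition with parts \<open>\<ge> a\<close> into an ordinary one with parts \<open>\<ge> a\<close>, and counting
these by their number of parts gives, up to the symmetry of binomial coefficients, the same sum
for \<open>f k = a + k (d + 1)\<close>, which is the enumeration for \<open>(m\<^sub>1, m\<^sub>2) = (a, a + d + 1)\<close>.
The sum is antitone in \<open>f\<close>, and raising \<open>f j\<close> for a single \<open>j \<ge> 2\<close> already lowers the
\<open>j\<close>-th term by at least \<open>n - f j\<close>, which is unbounded.\<close>

definition dec_lists :: "nat \<Rightarrow> nat \<Rightarrow> nat \<Rightarrow> nat list set" where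
  "dec_lists lo c k = {xs. length xs = k \<and> sorted_wrt (\<ge>) xs \<and> (\<forall>x\<in>set xs. lo \<le> x \<and> x \<le> lo + c)}"

lemma finite_dec_lists: "finite (dec_lists lo c k)"
proof (rule finite_subset)
  show "dec_lists lo c k \<subseteq> {xs. set xs \<subseteq> {..lo + c} \<and> length xs = k}"
    unfolding dec_lists_def by auto
qed (simp add: finite_lists_length_eq)

lemma dec_lists_Suc: "dec_lists lo c (Suc k) = (\<Union>i\<le>c. Cons (lo + i) ` dec_lists lo i k)"
proof (intro set_eqI iffI)
  fix xs assume "xs \<in> dec_lists lo c (Suc k)"
  then obtain x ys where xs: "xs = x # ys" and "length ys = k" "sorted_wrt (\<ge>) (x # ys)"
    and bounds: "\<forall>y\<in>set (x # ys). lo \<le> y \<and> y \<le> lo + c"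
    unfolding dec_lists_def by (cases xs) auto
  then have "ys \<in> dec_lists lo (x - lo) k" "x = lo + (x - lo)" "x - lo \<le> c"
    unfolding dec_lists_def by auto
  then show "xs \<in> (\<Union>i\<le>c. Cons (lo + i) ` dec_lists lo i k)"
    using xs by blast
next
  fix xs assume "xs \<in> (\<Union>i\<le>c. Cons (lo + i) ` dec_lists lo i k)"
  then show "xs \<in> dec_lists lo c (Suc k)"
    unfolding dec_lists_def by fastforce
qed

lemma card_dec_lists: "card (dec_lists lo c k) = (c + k) choose k"
proof (induction k arbitrary: c)
  case 0
  have "dec_lists lo c 0 = {[]}"
    unfolding dec_lists_def by auto
  then show ?case by simp
next
  case (Suc k)
  have "card (dec_lists lo c (Suc k)) = (\<Sum>i\<le>c. card (Cons (lo + i) ` dec_lists lo i k))"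
    unfolding dec_lists_Suc by (rule card_UN_disjoint) (auto simp: finite_dec_lists)
  also have "\<dots> = (\<Sum>i\<le>c. (k + i) choose k)"
    by (intro sum.cong refl) (simp add: card_image Suc add.commute)
  also have "\<dots> = (k + c + 1) choose (k + 1)"
    by (rule choose_rising_sum(1))
  finally show ?case
    by (simp add: add_ac)
qed

lemma choose_add_swap: "(a + b) choose b = (a + b) choose (a :: nat)"
  using binomial_symmetric[of b "a + b"] by simp

subsection \<open>Partitions with parts in the range of an increasing sequence\<close>

definition binom_sum :: "(nat \<Rightarrow> nat) \<Rightarrow> nat \<Rightarrow> nat" where
  "binom_sum f n = (\<Sum>j<n. if f j \<le> n then (n - f j + j) choose j else 0)"

lemma binom_sum_filter: "binom_sum f n = (\<Sum>j\<in>{j\<in>{..<n}. f j \<le> n}. (n - f j + j) choose j)"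
  unfolding binom_sum_def by (subst sum.inter_filter) auto

definition index_lists :: "(nat \<Rightarrow> nat) \<Rightarrow> nat \<Rightarrow> nat list set" where
  "index_lists f n = {ys. ys \<noteq> [] \<and> sorted_wrt (\<ge>) ys \<and> f (hd ys) + length ys - 1 = n}"

lemma strict_mono_less_self:
  fixes f :: "nat \<Rightarrow> nat"
  assumes "strict_mono f" "0 < f 0"
  shows "j < f j"
proof (induction j)
  case (Suc j)
  then show ?case using strict_monoD[OF assms(1), of j "Suc j"] by simp
qed (use assms in simp)

lemma index_lists_eq:
  assumes "strict_mono f" "0 < f 0"
  shows "index_lists f n = (\<Union>j\<in>{j\<in>{..<n}. f j \<le> n}. Cons j ` dec_lists 0 j (n - f j))"
proof (intro set_eqI iffI)
  fix ys assume "ys \<in> index_lists f n"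
  then obtain j r where ys: "ys = j # r" and "sorted_wrt (\<ge>) (j # r)" and len: "f j + length r = n"
    unfolding index_lists_def by (cases ys) auto
  moreover have "j < f j"
    using strict_mono_less_self[OF assms] .
  ultimately have "j \<in> {j\<in>{..<n}. f j \<le> n}" "r \<in> dec_lists 0 j (n - f j)"
    unfolding dec_lists_def by auto
  then show "ys \<in> (\<Union>j\<in>{j\<in>{..<n}. f j \<le> n}. Cons j ` dec_lists 0 j (n - f j))"
    using ys by blast
next
  fix ys assume "ys \<in> (\<Union>j\<in>{j\<in>{..<n}. f j \<le> n}. Cons j ` dec_lists 0 j (n - f j))"
  then show "ys \<in> index_lists f n"
    unfolding index_lists_def dec_lists_def by auto
qed

lemma card_index_lists:
  assumes "strict_mono f" "0 < f 0"
  shows "card (index_lists f n) = binom_sum f n"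
proof -
  have "card (index_lists f n) = (\<Sum>j\<in>{j\<in>{..<n}. f j \<le> n}. card (Cons j ` dec_lists 0 j (n - f j)))"
    unfolding index_lists_eq[OF assms]
    by (rule card_UN_disjoint) (auto simp: finite_dec_lists)
  also have "\<dots> = (\<Sum>j\<in>{j\<in>{..<n}. f j \<le> n}. (n - f j + j) choose j)"
  proof (intro sum.cong refl)
    fix j
    have "card (Cons j ` dec_lists 0 j (n - f j)) = (j + (n - f j)) choose (n - f j)"
      by (simp add: card_image card_dec_lists)
    then show "card (Cons j ` dec_lists 0 j (n - f j)) = (n - f j + j) choose j"
      by (simp only: choose_add_swap add.commute)
  qed
  finally show ?thesis
    by (simp add: binom_sum_filter)
qed

lemma partitions_in_range_eq:
  assumes "strict_mono f" "0 < f 0"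
  shows "{xs. is_partition xs \<and> perimeter xs = n \<and> set xs \<subseteq> range f} = map f ` index_lists f n"
proof (intro set_eqI iffI)
  fix xs assume "xs \<in> {xs. is_partition xs \<and> perimeter xs = n \<and> set xs \<subseteq> range f}"
  then have xs: "xs \<noteq> []" "sorted_wrt (\<ge>) xs" "perimeter xs = n" and "set xs \<subseteq> range f"
    unfolding is_partition_def by auto
  then have inv: "f (inv f x) = x" if "x \<in> set xs" for x
    using that by (auto simp: f_inv_into_f)
  then have xs_eq: "map f (map (inv f) xs) = xs"
    by (simp add: map_idI)
  have "sorted_wrt (\<ge>) (map (inv f) xs)"
    unfolding sorted_wrt_map
  proof (rule sorted_wrt_mono_rel[OF _ xs(2)])
    fix x y assume "x \<in> set xs" "y \<in> set xs" "y \<le> x"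
    then show "inv f y \<le> inv f x"
      using strict_mono_less_eq[OF assms(1), of "inv f y" "inv f x"] inv by simp
  qed
  moreover have "f (hd (map (inv f) xs)) = hd xs"
    using xs(1) inv by (simp add: hd_map)
  ultimately have "map (inv f) xs \<in> index_lists f n"
    using xs unfolding index_lists_def perimeter_def by auto
  then show "xs \<in> map f ` index_lists f n"
    using xs_eq by (metis image_eqI)
next
  fix xs assume "xs \<in> map f ` index_lists f n"
  then obtain ys where xs: "xs = map f ys" and ys: "ys \<in> index_lists f n"
    by auto
  have "sorted_wrt (\<ge>) xs"
    using ys strict_mono_less_eq[OF assms(1)] unfolding xs index_lists_def
    by (simp add: sorted_wrt_map)
  moreover have "0 < f j" for j
    using assms strict_mono_less_eq[OF assms(1), of 0 j] by simp
  ultimately show "xs \<in> {xs. is_partition xs \<and> perimeter xs = n \<and> set xs \<subseteq> range f}"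
    using ys unfolding xs index_lists_def is_partition_def perimeter_def by (auto simp: hd_map)
qed

lemma card_partitions_in_range:
  assumes "strict_mono f" "0 < f 0"
  shows "card {xs. is_partition xs \<and> perimeter xs = n \<and> set xs \<subseteq> range f} = binom_sum f n"
proof -
  have "inj_on (map f) (index_lists f n)"
    using inj_mapI[OF strict_mono_imp_inj_on[OF assms(1)]] by (rule inj_on_subset) simp
  then show ?thesis
    unfolding partitions_in_range_eq[OF assms] by (simp add: card_image card_index_lists[OF assms])
qed

subsection \<open>Parts in two residue classes\<close>

definition residue_enum :: "nat \<Rightarrow> nat \<Rightarrow> nat \<Rightarrow> nat \<Rightarrow> nat" where
  "residue_enum m m1 m2 j = (if even j then m1 else m2) + (j div 2) * m"

lemma strict_mono_residue_enum:
  assumes "0 < m1" "m1 < m2" "m2 \<le> m"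
  shows "strict_mono (residue_enum m m1 m2)"
  unfolding strict_mono_Suc_iff
proof
  fix j
  have "Suc j div 2 = (if even j then j div 2 else Suc (j div 2))"
    by presburger
  then show "residue_enum m m1 m2 j < residue_enum m m1 m2 (Suc j)"
    using assms by (simp add: residue_enum_def)
qed

lemma eq_residue_plus_mult:
  fixes x r m :: nat
  assumes "0 < x" "0 < r" "r \<le> m" "x mod m = r mod m"
  shows "x = r + ((x - r) div m) * m"
proof -
  have "r \<le> x"
  proof (cases "r < m")
    case True
    then show ?thesis using assms(4) by (metis mod_less mod_less_eq_dividend)
  next
    case False
    then have "m dvd x" using assms by (simp add: mod_eq_0_iff_dvd)
    then show ?thesis using assms False by (simp add: dvd_imp_le)
  qed
  moreover from this have "m dvd x - r"
    using assms(4) by (simp add: mod_eq_dvd_iff_nat)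
  ultimately show ?thesis by simp
qed

lemma range_residue_enum:
  assumes "0 < m1" "m1 < m2" "m2 \<le> m" "0 < x"
  shows "x \<in> range (residue_enum m m1 m2) \<longleftrightarrow> x mod m = m1 mod m \<or> x mod m = m2 mod m"
proof
  assume "x mod m = m1 mod m \<or> x mod m = m2 mod m"
  then show "x \<in> range (residue_enum m m1 m2)"
  proof
    assume "x mod m = m1 mod m"
    then have "x = residue_enum m m1 m2 (2 * ((x - m1) div m))"
      using eq_residue_plus_mult[of x m1 m] assms by (simp add: residue_enum_def)
    then show ?thesis by blast
  next
    assume "x mod m = m2 mod m"
    then have "x = residue_enum m m1 m2 (2 * ((x - m2) div m) + 1)"
      using eq_residue_plus_mult[of x m2 m] assms by (simp add: residue_enum_def)
    then show ?thesis by blast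
  qed
qed (auto simp: residue_enum_def)

lemma l_count_eq_binom_sum:
  assumes "0 < m1" "m1 < m2" "m2 \<le> m"
  shows "l_count m m1 m2 n = binom_sum (residue_enum m m1 m2) n"
proof -
  have "{xs. is_partition xs \<and> perimeter xs = n \<and> (\<forall>x\<in>set xs. x mod m = m1 mod m \<or> x mod m = m2 mod m)}
      = {xs. is_partition xs \<and> perimeter xs = n \<and> set xs \<subseteq> range (residue_enum m m1 m2)}"
    using range_residue_enum[OF assms] unfolding is_partition_def by blast
  moreover have "0 < residue_enum m m1 m2 0"
    using assms by (simp add: residue_enum_def)
  ultimately show ?thesis
    unfolding l_count_def
    using card_partitions_in_range strict_mono_residue_enum assms by simp
qed

subsection \<open>\<open>d\<close>-distinct partitions\<close>

fun stretch :: "nat \<Rightarrow> nat list \<Rightarrow> nat list" where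
  "stretch d [] = []"
| "stretch d (x # xs) = (x + length xs * d) # stretch d xs"

fun shrink :: "nat \<Rightarrow> nat list \<Rightarrow> nat list" where
  "shrink d [] = []"
| "shrink d (x # xs) = (x - length xs * d) # shrink d xs"

lemma length_stretch [simp]: "length (stretch d xs) = length xs"
  by (induction xs) auto

lemma length_shrink [simp]: "length (shrink d xs) = length xs"
  by (induction xs) auto

lemma stretch_eq_Nil_iff [simp]: "stretch d xs = [] \<longleftrightarrow> xs = []"
  by (cases xs) auto

lemma shrink_stretch [simp]: "shrink d (stretch d xs) = xs"
  by (induction xs) auto

lemma d_distinct_Cons:
  "d_distinct d (x # xs) \<longleftrightarrow> (\<forall>y\<in>set xs. y + d \<le> x) \<and> d_distinct d xs"
proof
  assume H: "d_distinct d (x # xs)"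
  have "y + d \<le> x" if "y \<in> set xs" for y
  proof -
    obtain j where "j < length xs" "xs ! j = y"
      using \<open>y \<in> set xs\<close> by (auto simp: in_set_conv_nth)
    then show ?thesis
      using H[unfolded d_distinct_def, rule_format, of 0 "Suc j"] by simp
  qed
  moreover have "d_distinct d xs"
    unfolding d_distinct_def
    using H[unfolded d_distinct_def, rule_format, of "Suc _" "Suc _"] by simp
  ultimately show "(\<forall>y\<in>set xs. y + d \<le> x) \<and> d_distinct d xs" by blast
next
  assume H: "(\<forall>y\<in>set xs. y + d \<le> x) \<and> d_distinct d xs"
  show "d_distinct d (x # xs)"
    unfolding d_distinct_def
  proof (intro allI impI)
    fix i j assume ij: "i < j \<and> j < length (x # xs)"
    then obtain j' where j': "j = Suc j'" "j' < length xs"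
      by (cases j) auto
    show "(x # xs) ! j + d \<le> (x # xs) ! i"
    proof (cases i)
      case 0
      then show ?thesis using H j' by simp
    next
      case (Suc i')
      then show ?thesis
        using H[THEN conjunct2, unfolded d_distinct_def, rule_format, of i' j'] ij j' by simp
    qed
  qed
qed

lemma d_distinct_imp_sorted: "d_distinct d xs \<Longrightarrow> sorted_wrt (\<ge>) xs"
  by (induction xs) (auto simp: d_distinct_Cons)

lemma set_stretch_bounds:
  "y \<in> set (stretch d xs) \<Longrightarrow> \<exists>z\<in>set xs. z \<le> y \<and> y + d \<le> z + length xs * d"
proof (induction xs)
  case (Cons x xs)
  show ?case
  proof (cases "y \<in> set (stretch d xs)")
    case True
    then obtain z where "z \<in> set xs" "z \<le> y" "y + d \<le> z + length xs * d"
      using Cons.IH by blast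
    then show ?thesis by force
  qed (use Cons.prems in auto)
qed simp

lemma d_distinct_stretch: "sorted_wrt (\<ge>) xs \<Longrightarrow> d_distinct d (stretch d xs)"
proof (induction xs)
  case (Cons x xs)
  have "y + d \<le> x + length xs * d" if "y \<in> set (stretch d xs)" for y
    using set_stretch_bounds[OF that] Cons.prems by fastforce
  then show ?case
    using Cons by (simp add: d_distinct_Cons)
qed (simp add: d_distinct_def)

lemma d_distinct_hd_ge:
  assumes "d_distinct d p" "\<forall>x\<in>set p. a \<le> x" "p \<noteq> []"
  shows "a + (length p - 1) * d \<le> hd p"
  using assms
proof (induction p)
  case (Cons x xs)
  then show ?case
    by (cases xs) (auto simp: d_distinct_Cons)
qed simp

lemma shrink_d_distinct:
  assumes "d_distinct d p" "\<forall>x\<in>set p. a \<le> x"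
  shows "sorted_wrt (\<ge>) (shrink d p) \<and> (\<forall>y\<in>set (shrink d p). a \<le> y) \<and> stretch d (shrink d p) = p"
  using assms
proof (induction p)
  case (Cons x xs)
  then have IH: "sorted_wrt (\<ge>) (shrink d xs)" "\<forall>y\<in>set (shrink d xs). a \<le> y"
      "stretch d (shrink d xs) = xs"
    by (auto simp: d_distinct_Cons)
  have x_ge: "a + length xs * d \<le> x"
    using d_distinct_hd_ge[OF Cons.prems] by simp
  have "y \<le> x - length xs * d" if "y \<in> set (shrink d xs)" for y
  proof (cases xs)
    case (Cons u v)
    have "y \<le> u - length v * d"
      using that IH(1) Cons by auto
    moreover have "u + d \<le> x"
      using Cons.prems Cons by (simp add: d_distinct_Cons)
    ultimately show ?thesis
      using Cons by simp
  qed (use that in simp)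
  then show ?case
    using IH x_ge by simp
qed simp

lemma perimeter_stretch:
  "xs \<noteq> [] \<Longrightarrow> perimeter (stretch d xs) = hd xs + (length xs - 1) * (d + 1)"
  by (cases xs) (simp_all add: perimeter_def algebra_simps)

definition shrunk_lists :: "nat \<Rightarrow> nat \<Rightarrow> nat \<Rightarrow> nat list set" where
  "shrunk_lists a d n = {q. q \<noteq> [] \<and> sorted_wrt (\<ge>) q \<and> (\<forall>x\<in>set q. a \<le> x)
                             \<and> hd q + (length q - 1) * (d + 1) = n}"

lemma h_count_eq_card_shrunk_lists:
  assumes "0 < a"
  shows "h_count d a n = card (shrunk_lists a d n)"
proof -
  let ?H = "{xs. is_partition xs \<and> perimeter xs = n \<and> d_distinct d xs \<and> (\<forall>x\<in>set xs. a \<le> x)}"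
  have "bij_betw (stretch d) (shrunk_lists a d n) ?H"
  proof (rule bij_betw_byWitness[where f' = "shrink d"])
    show "\<forall>p\<in>?H. stretch d (shrink d p) = p"
      using shrink_d_distinct by blast
    show "stretch d ` shrunk_lists a d n \<subseteq> ?H"
    proof
      fix p assume "p \<in> stretch d ` shrunk_lists a d n"
      then obtain q where p: "p = stretch d q" and q: "q \<in> shrunk_lists a d n"
        by auto
      then have "d_distinct d p"
        using d_distinct_stretch unfolding shrunk_lists_def by blast
      moreover have "\<forall>y\<in>set p. a \<le> y"
        using q set_stretch_bounds unfolding p shrunk_lists_def by fastforce
      moreover have "p \<noteq> []" "perimeter p = n"
        using q perimeter_stretch unfolding p shrunk_lists_def by auto
      ultimately show "p \<in> ?H"
        using d_distinct_imp_sorted assms unfolding is_partition_def by fastforce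
    qed
    show "shrink d ` ?H \<subseteq> shrunk_lists a d n"
    proof
      fix q assume "q \<in> shrink d ` ?H"
      then obtain p where q: "q = shrink d p" and p: "p \<in> ?H"
        by auto
      then have "sorted_wrt (\<ge>) q" "\<forall>y\<in>set q. a \<le> y" "stretch d q = p"
        using shrink_d_distinct by auto
      moreover have "q \<noteq> []"
        using p unfolding q is_partition_def by (cases p) auto
      ultimately show "q \<in> shrunk_lists a d n"
        using p perimeter_stretch[of q d] unfolding shrunk_lists_def by auto
    qed
  qed simp
  then show ?thesis
    unfolding h_count_def by (simp add: bij_betw_same_card)
qed

lemma shrunk_lists_eq:
  assumes "0 < a"
  shows "shrunk_lists a d n = (\<Union>k\<in>{k\<in>{..<n}. a + k * (d + 1) \<le> n}.
           Cons (n - k * (d + 1)) ` dec_lists a (n - (a + k * (d + 1))) k)"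
proof (intro set_eqI iffI)
  fix q assume "q \<in> shrunk_lists a d n"
  then obtain c r where q: "q = c # r" and "sorted_wrt (\<ge>) (c # r)" "\<forall>x\<in>set (c # r). a \<le> x"
    and "c + length r * (d + 1) = n"
    unfolding shrunk_lists_def by (cases q) auto
  then have "length r \<in> {k\<in>{..<n}. a + k * (d + 1) \<le> n}" "c = n - length r * (d + 1)"
    "r \<in> dec_lists a (n - (a + length r * (d + 1))) (length r)"
    using assms unfolding dec_lists_def by auto
  then show "q \<in> (\<Union>k\<in>{k\<in>{..<n}. a + k * (d + 1) \<le> n}.
           Cons (n - k * (d + 1)) ` dec_lists a (n - (a + k * (d + 1))) k)"
    using q by blast
next
  fix q assume "q \<in> (\<Union>k\<in>{k\<in>{..<n}. a + k * (d + 1) \<le> n}.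
           Cons (n - k * (d + 1)) ` dec_lists a (n - (a + k * (d + 1))) k)"
  then show "q \<in> shrunk_lists a d n"
    unfolding shrunk_lists_def dec_lists_def by auto
qed

lemma card_shrunk_lists:
  assumes "0 < a"
  shows "card (shrunk_lists a d n) = binom_sum (\<lambda>k. a + k * (d + 1)) n"
proof -
  have "card (shrunk_lists a d n) = (\<Sum>k\<in>{k\<in>{..<n}. a + k * (d + 1) \<le> n}.
          card (Cons (n - k * (d + 1)) ` dec_lists a (n - (a + k * (d + 1))) k))"
    unfolding shrunk_lists_eq[OF assms]
    by (rule card_UN_disjoint) (simp_all add: finite_dec_lists, auto simp: dec_lists_def)
  also have "\<dots> = (\<Sum>k\<in>{k\<in>{..<n}. a + k * (d + 1) \<le> n}. (n - (a + k * (d + 1)) + k) choose k)"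
    by (intro sum.cong refl) (simp add: card_image card_dec_lists)
  finally show ?thesis
    by (simp add: binom_sum_filter)
qed

lemma residue_enum_arith_progression:
  "residue_enum (2 * d + 2) a (a + d + 1) = (\<lambda>k. a + k * (d + 1))"
proof
  fix k :: nat
  obtain i where "k = 2 * i \<or> k = 2 * i + 1"
    by (metis odd_two_times_div_two_succ dvd_mult_div_cancel)
  then show "residue_enum (2 * d + 2) a (a + d + 1) k = a + k * (d + 1)"
    by (auto simp: residue_enum_def algebra_simps)
qed

lemma h_count_eq_binom_sum:
  assumes "0 < a"
  shows "h_count d a n = binom_sum (residue_enum (2 * d + 2) a (a + d + 1)) n"
  by (simp only: residue_enum_arith_progression h_count_eq_card_shrunk_lists[OF assms]
      card_shrunk_lists[OF assms])

subsection \<open>Comparing the binomial sums\<close>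

lemma binomial_ge_Suc_diff: "1 \<le> k \<Longrightarrow> N + 1 - k \<le> N choose k"
proof (induction k arbitrary: N)
  case (Suc k)
  show ?case
  proof (cases "k = 0 \<or> N = 0")
    case False
    then obtain M where "N = Suc M" "1 \<le> k"
      by (cases N) auto
    then have "N + 1 - Suc k \<le> M choose k"
      using Suc.IH by simp
    also have "\<dots> \<le> N choose Suc k"
      using \<open>N = Suc M\<close> by simp
    finally show ?thesis .
  qed auto
qed simp

lemma binom_sum_gap:
  assumes le: "\<And>j. f j \<le> g j" and less: "f j0 < g j0" and "2 \<le> j0" "j0 < n" "g j0 \<le> n"
  shows "binom_sum g n + (n - g j0) \<le> binom_sum f n"
proof -
  let ?T = "\<lambda>f j. if f j \<le> n then (n - f j + j) choose j else 0"
  have term_le: "?T g j + (if j = j0 then n - g j0 else 0) \<le> ?T f j" for j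
  proof (cases "j = j0")
    case False
    then show ?thesis
      using le[of j] by (auto intro: binomial_right_mono)
  next
    case True
    obtain i where j0: "j0 = Suc i" "1 \<le> i"
      using \<open>2 \<le> j0\<close> by (cases j0) auto
    define N where "N = n - g j0 + j0"
    \<comment> \<open>Pascal's rule: raising the top by one adds \<open>N choose i\<close>, which is large as \<open>i \<ge> 1\<close>.\<close>
    have "(N choose j0) + (n - g j0) \<le> (N choose i) + (N choose j0)"
      using binomial_ge_Suc_diff[of i N] j0 unfolding N_def by simp
    also have "\<dots> = Suc N choose j0"
      using j0 by simp
    also have "\<dots> \<le> (n - f j0 + j0) choose j0"
      using assms unfolding N_def by (intro binomial_right_mono) simp
    finally show ?thesis
      using True assms unfolding N_def by simp
  qed
  have "binom_sum g n + (n - g j0) = (\<Sum>j<n. ?T g j + (if j = j0 then n - g j0 else 0))"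
    unfolding binom_sum_def sum.distrib using \<open>j0 < n\<close> by simp
  also have "\<dots> \<le> binom_sum f n"
    unfolding binom_sum_def by (rule sum_mono) (rule term_le)
  finally show ?thesis .
qed

lemma binom_sum_diff_at_top:
  assumes "\<And>j. f j \<le> g j" "f j0 < g j0" "2 \<le> j0"
  shows "filterlim (\<lambda>n. real (binom_sum f n) - real (binom_sum g n)) at_top sequentially"
  unfolding filterlim_at_top eventually_sequentially
proof (intro allI exI impI)
  fix Z :: real and n assume n: "nat \<lceil>Z\<rceil> + g j0 + j0 + 1 \<le> n"
  then have "binom_sum g n + (n - g j0) \<le> binom_sum f n"
    using binom_sum_gap[of f g j0 n] assms by simp
  then show "Z \<le> real (binom_sum f n) - real (binom_sum g n)"
    using n by linarith
qed

lemma residue_enum_diff_at_top: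
  assumes "m1 \<le> m1'" "m2 \<le> m2'" "(m1, m2) \<noteq> (m1', m2')"
  shows "filterlim (\<lambda>n. real (binom_sum (residue_enum m m1 m2) n)
                        - real (binom_sum (residue_enum m m1' m2') n)) at_top sequentially"
proof -
  have le: "residue_enum m m1 m2 j \<le> residue_enum m m1' m2' j" for j
    using assms by (simp add: residue_enum_def)
  obtain j0 where "2 \<le> j0" "residue_enum m m1 m2 j0 < residue_enum m m1' m2' j0"
  proof (cases "m1 < m1'")
    case True
    then show ?thesis using that[of 2] by (simp add: residue_enum_def)
  next
    case False
    then show ?thesis using that[of 3] assms by (simp add: residue_enum_def)
  qed
  with le show ?thesis
    by (intro binom_sum_diff_at_top)
qed

theorem mainTheorem11:
  fixes d a m1 m2 :: nat
  assumes "1 \<le> d" and "1 \<le> a" and "a \<le> d + 1"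
    and "0 < m1" and "m1 < m2" and "m2 \<le> 2 * d + 2"
  shows "(a \<le> m1 \<and> a + d + 1 \<le> m2 \<and> (m1, m2) \<noteq> (a, a + d + 1) \<longrightarrow>
            filterlim (\<lambda>n. real (h_count d a n) - real (l_count (2 * d + 2) m1 m2 n)) at_top sequentially)
       \<and> (m1 \<le> a \<and> m2 \<le> a + d + 1 \<and> (m1, m2) \<noteq> (a, a + d + 1) \<longrightarrow>
            filterlim (\<lambda>n. real (h_count d a n) - real (l_count (2 * d + 2) m1 m2 n)) at_bot sequentially)
       \<and> ((m1, m2) = (a, a + d + 1) \<longrightarrow>
            (\<forall>n. h_count d a n = l_count (2 * d + 2) m1 m2 n))"
proof -
  let ?h = "binom_sum (residue_enum (2 * d + 2) a (a + d + 1))"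
  let ?l = "binom_sum (residue_enum (2 * d + 2) m1 m2)"
  have h: "h_count d a n = ?h n" and l: "l_count (2 * d + 2) m1 m2 n = ?l n" for n
    using h_count_eq_binom_sum l_count_eq_binom_sum assms by auto
  have "filterlim (\<lambda>n. real (?h n) - real (?l n)) at_top sequentially"
    if "a \<le> m1" "a + d + 1 \<le> m2" "(m1, m2) \<noteq> (a, a + d + 1)"
    using residue_enum_diff_at_top that by auto
  moreover have "filterlim (\<lambda>n. real (?h n) - real (?l n)) at_bot sequentially"
    if "m1 \<le> a" "m2 \<le> a + d + 1" "(m1, m2) \<noteq> (a, a + d + 1)"
    using residue_enum_diff_at_top[of m1 a m2 "a + d + 1"] that
    unfolding filterlim_uminus_at_bot by auto
  ultimately show ?thesis
    unfolding h l by auto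
qed

end
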